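(* For any integers $q\ge 2$ and positive integers $w\le n$, there exists a $\mathrm{TOC}_q(n,2,w)$.
   Context: $\mathcal{H}_q(n,w)$ is the set of all words of length $n$ over $\mathbb{Z}_q$ with exactly $w$ nonzero entries, with the Hamming distance. An $(n,d,w)_q$-code is a nonempty subset of $\mathcal{H}_q(n,w)$ in which any two distinct words have Hamming distance at least $d$; $A_q(n,d,w)$ is the maximum size of such a code and a code of this size is optimal. A $\mathrm{TOC}_q(n,d,w)$ (tiling) is a partition of $\mathcal{H}_q(n,w)$ into mutually disjoint optimal $(n,d,w)_q$-codes. *)

theory Defs
  imports Main "HOL-Library.FuncSet"
begin

definition words :: "nat \<Rightarrow> nat \<Rightarrow> (nat \<Rightarrow> nat) set" where
  "words q n = {0..<n} \<rightarrow>\<^sub>E {0..<q}"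

definition hweight :: "nat \<Rightarrow> (nat \<Rightarrow> nat) \<Rightarrow> nat" where
  "hweight n x = card {i. i < n \<and> x i \<noteq> 0}"

definition hdist :: "nat \<Rightarrow> (nat \<Rightarrow> nat) \<Rightarrow> (nat \<Rightarrow> nat) \<Rightarrow> nat" where
  "hdist n x y = card {i. i < n \<and> x i \<noteq> y i}"

definition Hcw :: "nat \<Rightarrow> nat \<Rightarrow> nat \<Rightarrow> (nat \<Rightarrow> nat) set" where
  "Hcw q n w = {x \<in> words q n. hweight n x = w}"

definition is_code :: "nat \<Rightarrow> nat \<Rightarrow> nat \<Rightarrow> nat \<Rightarrow> (nat \<Rightarrow> nat) set \<Rightarrow> bool" where
  "is_code q n d w C \<longleftrightarrow> C \<noteq> {} \<and> C \<subseteq> Hcw q n w \<and>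
     (\<forall>x\<in>C. \<forall>y\<in>C. x \<noteq> y \<longrightarrow> hdist n x y \<ge> d)"

definition A_max :: "nat \<Rightarrow> nat \<Rightarrow> nat \<Rightarrow> nat \<Rightarrow> nat" where
  "A_max q n d w = Max {card C | C. is_code q n d w C}"

definition optimal_code :: "nat \<Rightarrow> nat \<Rightarrow> nat \<Rightarrow> nat \<Rightarrow> (nat \<Rightarrow> nat) set \<Rightarrow> bool" where
  "optimal_code q n d w C \<longleftrightarrow> is_code q n d w C \<and> card C = A_max q n d w"

definition is_TOC :: "nat \<Rightarrow> nat \<Rightarrow> nat \<Rightarrow> nat \<Rightarrow> (nat \<Rightarrow> nat) set set \<Rightarrow> bool" where
  "is_TOC q n d w P \<longleftrightarrow> \<Union>P = Hcw q n w \<and>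
     (\<forall>C\<in>P. optimal_code q n d w C) \<and>
     (\<forall>C\<in>P. \<forall>D\<in>P. C \<noteq> D \<longrightarrow> C \<inter> D = {})"

end

theory Submission
  imports Defs
begin

text \<open>Split \<open>H_q(n,w)\<close> into the \<open>q - 1\<close> classes of words whose coordinate sum has a
  fixed residue modulo \<open>q - 1\<close>. Two words of the same weight at distance 1 differ in one
  position where both are nonzero, i.e. in two values from \<open>{1..q-1}\<close>, which are pairwise
  incongruent modulo \<open>q - 1\<close>; hence every class has minimum distance 2. Conversely,
  rewriting the last nonzero entry of a word so that its coordinate sum falls into a given
  class identifies only words at distance at most 1, so it maps every code of minimum
  distance 2 injectively into that class. Thus each class is an optimal code.\<close>

definition supp :: "nat \<Rightarrow> (nat \<Rightarrow> nat) \<Rightarrow> nat set" where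
  "supp n x = {i. i < n \<and> x i \<noteq> 0}"

definition weight_sum :: "nat \<Rightarrow> (nat \<Rightarrow> nat) \<Rightarrow> nat" where
  "weight_sum n x = (\<Sum>i<n. x i)"

definition residue_class :: "nat \<Rightarrow> nat \<Rightarrow> nat \<Rightarrow> nat \<Rightarrow> (nat \<Rightarrow> nat) set" where
  "residue_class q n w s = {x \<in> Hcw q n w. weight_sum n x mod (q - 1) = s}"

text \<open>The unique \<open>v \<in> {1..k}\<close> with \<open>a + v \<equiv> s (mod k)\<close>, for \<open>s < k\<close>.\<close>
definition residue_complement :: "nat \<Rightarrow> nat \<Rightarrow> nat \<Rightarrow> nat" where
  "residue_complement k a s = (s + k - a mod k - 1) mod k + 1"

definition adjust_last :: "nat \<Rightarrow> nat \<Rightarrow> nat \<Rightarrow> (nat \<Rightarrow> nat) \<Rightarrow> nat \<Rightarrow> nat" where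
  "adjust_last q n s x = x(Max (supp n x) :=
     residue_complement (q - 1) (weight_sum n x - x (Max (supp n x))) s)"

lemma hweight_eq_card_supp: "hweight n x = card (supp n x)"
  by (simp add: hweight_def supp_def)

lemma finite_supp [simp]: "finite (supp n x)"
  by (simp add: supp_def)

lemma finite_Hcw: "finite (Hcw q n w)"
  by (rule finite_subset[of _ "words q n"]) (auto simp: Hcw_def words_def finite_PiE)

lemma words_entry_less: "x \<in> words q n \<Longrightarrow> i < n \<Longrightarrow> x i < q"
  by (auto simp: words_def)

lemma words_eq_if_hdist_eq_0:
  assumes "x \<in> words q n" "y \<in> words q n" "hdist n x y = 0"
  shows "x = y"
proof
  fix i
  have "{i. i < n \<and> x i \<noteq> y i} = {}" using assms(3) by (simp add: hdist_def)
  then show "x i = y i" using assms(1,2) unfolding words_def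
    by (cases "i < n") (auto simp: PiE_def extensional_def)
qed

lemma hdist_le_1_if_agree_off:
  assumes "\<And>i. i \<noteq> m \<Longrightarrow> x i = y i"
  shows "hdist n x y \<le> 1"
proof -
  have "{i. i < n \<and> x i \<noteq> y i} \<subseteq> {m}" using assms by auto
  then show ?thesis unfolding hdist_def using card_mono[of "{m}"] by fastforce
qed

lemma hdist_eq_1E:
  assumes "hdist n x y = 1"
  obtains j where "j < n" "x j \<noteq> y j" "\<And>i. i < n \<Longrightarrow> i \<noteq> j \<Longrightarrow> x i = y i"
proof -
  obtain j where "{i. i < n \<and> x i \<noteq> y i} = {j}"
    using assms by (auto simp: hdist_def card_Suc_eq)
  then show thesis by (intro that) blast+
qed

lemma weight_sum_agree_off:
  assumes "j < n" and "\<And>i. i < n \<Longrightarrow> i \<noteq> j \<Longrightarrow> x i = y i"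
  shows "weight_sum n x + y j = weight_sum n y + x j"
proof -
  have "(\<Sum>i\<in>{..<n}-{j}. x i) = (\<Sum>i\<in>{..<n}-{j}. y i)"
    using assms(2) by (intro sum.cong) auto
  then show ?thesis
    using assms(1) by (simp add: weight_sum_def sum.remove[of "{..<n}" j])
qed

lemma nonzero_iff_if_agree_off:
  assumes "j < n" and agree: "\<And>i. i < n \<Longrightarrow> i \<noteq> j \<Longrightarrow> x i = y i"
    and "card (supp n x) = card (supp n y)"
  shows "x j = 0 \<longleftrightarrow> y j = 0"
proof (rule ccontr)
  have grow: "card (supp n v) = Suc (card (supp n u))"
    if "u j = 0" "v j \<noteq> 0" "\<And>i. i < n \<Longrightarrow> i \<noteq> j \<Longrightarrow> u i = v i" for u v
  proof -
    have "supp n v = insert j (supp n u)" "j \<notin> supp n u"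
      using that \<open>j < n\<close> by (auto simp: supp_def) (metis gr_implies_not0)
    then show ?thesis by simp
  qed
  assume "\<not> (x j = 0 \<longleftrightarrow> y j = 0)"
  then show False
    using grow[of x y] grow[of y x] agree assms(3) by (cases "x j = 0") auto
qed

lemma eq_if_mod_eq_in_1_to:
  fixes a b k :: nat
  assumes "0 < a" "0 < b" "a \<le> k" "b \<le> k" "a mod k = b mod k"
  shows "a = b"
  using assms by (metis le_neq_implies_less mod_less mod_self neq0_conv)

lemma mod_eq_cancel_sum:
  fixes a b c d k :: nat
  assumes "a + d = b + c" and "a mod k = b mod k"
  shows "c mod k = d mod k"
proof -
  obtain i j where "a + k * i = b + k * j" using assms(2) nat_mod_eq_iff by blast
  then have "c + k * i = d + k * j" using assms(1) by linarith
  then show ?thesis using nat_mod_eq_iff by blast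
qed

lemma residue_complement_bounds: "0 < k \<Longrightarrow> residue_complement k a s \<in> {1..k}"
  by (simp add: residue_complement_def Suc_leI)

lemma mod_add_residue_complement:
  fixes k a s :: nat
  assumes "s < k"
  shows "(a + residue_complement k a s) mod k = s"
proof -
  define r where "r = a mod k"
  have "r < k" using assms by (simp add: r_def)
  have "(a + residue_complement k a s) mod k = (r + residue_complement k a s) mod k"
    by (simp add: r_def mod_add_left_eq)
  also have "\<dots> = ((s + k - r - 1) mod k + (r + 1)) mod k"
    by (simp add: residue_complement_def r_def ac_simps)
  also have "\<dots> = ((s + k - r - 1) + (r + 1)) mod k"
    by (metis mod_add_left_eq)
  also have "(s + k - r - 1) + (r + 1) = s + k" using \<open>r < k\<close> by simp
  finally show ?thesis using assms by simp
qed

lemma optimal_codeI: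
  assumes "is_code q n d w C" and "\<And>D. is_code q n d w D \<Longrightarrow> card D \<le> card C"
  shows "optimal_code q n d w C"
proof -
  have "{card D | D. is_code q n d w D} \<subseteq> card ` Pow (Hcw q n w)"
    by (auto simp: is_code_def)
  then have "finite {card D | D. is_code q n d w D}"
    by (rule finite_subset) (simp add: finite_Hcw)
  then have "A_max q n d w = card C"
    unfolding A_max_def by (rule Max_eqI) (use assms in auto)
  then show ?thesis using assms(1) by (simp add: optimal_code_def)
qed

lemma card_code_le_if_collapsing:
  assumes D: "is_code q n d w D"
    and maps: "f ` Hcw q n w \<subseteq> C" and "finite C"
    and collapse: "\<And>x y. x \<in> Hcw q n w \<Longrightarrow> y \<in> Hcw q n w \<Longrightarrow> f x = f y \<Longrightarrow> hdist n x y < d"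
  shows "card D \<le> card C"
proof (rule card_inj_on_le[of f])
  show "inj_on f D"
  proof (rule inj_onI)
    fix x y assume "x \<in> D" "y \<in> D" "f x = f y"
    then have "hdist n x y < d" using D by (intro collapse) (auto simp: is_code_def)
    then show "x = y" using D \<open>x \<in> D\<close> \<open>y \<in> D\<close> unfolding is_code_def by (meson not_le)
  qed
  show "f ` D \<subseteq> C" using D maps by (auto simp: is_code_def)
qed fact

lemma is_TOC_fibers:
  assumes "\<And>x. x \<in> Hcw q n w \<Longrightarrow> f x \<in> S"
    and "\<And>s. s \<in> S \<Longrightarrow> optimal_code q n d w {x \<in> Hcw q n w. f x = s}"
  shows "is_TOC q n d w ((\<lambda>s. {x \<in> Hcw q n w. f x = s}) ` S)"
  unfolding is_TOC_def
proof (intro conjI ballI impI)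
  show "\<Union>((\<lambda>s. {x \<in> Hcw q n w. f x = s}) ` S) = Hcw q n w"
    using assms(1) by auto
  show "optimal_code q n d w C" if "C \<in> (\<lambda>s. {x \<in> Hcw q n w. f x = s}) ` S" for C
    using that assms(2) by auto
  show "C \<inter> D = {}" if "C \<in> (\<lambda>s. {x \<in> Hcw q n w. f x = s}) ` S"
    and "D \<in> (\<lambda>s. {x \<in> Hcw q n w. f x = s}) ` S" and "C \<noteq> D" for C D
    using that by auto
qed

lemma residue_class_min_dist:
  assumes x: "x \<in> residue_class q n w s" and y: "y \<in> residue_class q n w s" and "x \<noteq> y"
  shows "2 \<le> hdist n x y"
proof (rule ccontr)
  define k where "k = q - 1"
  have xw: "x \<in> words q n" and yw: "y \<in> words q n"
    using x y by (auto simp: residue_class_def Hcw_def)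
  assume "\<not> 2 \<le> hdist n x y"
  moreover have "hdist n x y \<noteq> 0" using words_eq_if_hdist_eq_0[OF xw yw] \<open>x \<noteq> y\<close> by auto
  ultimately have "hdist n x y = 1" by linarith
  then obtain j where j: "j < n" "x j \<noteq> y j"
    and agree: "\<And>i. i < n \<Longrightarrow> i \<noteq> j \<Longrightarrow> x i = y i"
    by (metis hdist_eq_1E)
  have "card (supp n x) = card (supp n y)"
    using x y by (simp add: residue_class_def Hcw_def hweight_eq_card_supp)
  with j(1) agree have "x j = 0 \<longleftrightarrow> y j = 0" by (rule nonzero_iff_if_agree_off)
  then have nonzero: "0 < x j" "0 < y j" using j(2) by auto
  have bounded: "x j \<le> k" "y j \<le> k"
    using words_entry_less[OF xw j(1)] words_entry_less[OF yw j(1)] by (simp_all add: k_def)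
  have "weight_sum n x + y j = weight_sum n y + x j"
    using j(1) agree by (rule weight_sum_agree_off)
  moreover have "weight_sum n x mod k = weight_sum n y mod k"
    using x y by (simp add: residue_class_def k_def)
  ultimately have "x j mod k = y j mod k" by (rule mod_eq_cancel_sum)
  with nonzero bounded have "x j = y j" by (rule eq_if_mod_eq_in_1_to)
  with j(2) show False ..
qed

context
  fixes q n w :: nat
  assumes q: "q \<ge> 2" and w: "1 \<le> w"
begin

lemma
  assumes x: "x \<in> Hcw q n w" and s: "s < q - 1"
  shows adjust_last_in_residue_class: "adjust_last q n s x \<in> residue_class q n w s"
    and supp_adjust_last: "supp n (adjust_last q n s x) = supp n x"
    and adjust_last_eq_off_Max: "\<And>i. i \<noteq> Max (supp n x) \<Longrightarrow> adjust_last q n s x i = x i"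
proof -
  define m where "m = Max (supp n x)"
  define v where "v = residue_complement (q - 1) (weight_sum n x - x m) s"
  have "supp n x \<noteq> {}" using x w by (auto simp: Hcw_def hweight_eq_card_supp)
  then have "m \<in> supp n x" unfolding m_def by (rule Max_in[OF finite_supp])
  then have m: "m < n" "x m \<noteq> 0" by (auto simp: supp_def)
  have adj: "adjust_last q n s x = x(m := v)" by (simp add: adjust_last_def m_def v_def)
  have "v \<in> {1..q - 1}" using residue_complement_bounds q by (simp add: v_def)
  then have v: "1 \<le> v" "v < q" using q by auto
  show supp: "supp n (adjust_last q n s x) = supp n x"
    unfolding adj supp_def using v(1) m(2) by auto
  show "\<And>i. i \<noteq> Max (supp n x) \<Longrightarrow> adjust_last q n s x i = x i"
    using adj m_def by simp
  have "weight_sum n (x(m := v)) + x m = weight_sum n x + v"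
    using weight_sum_agree_off[of m n "x(m := v)" x] m(1) by simp
  moreover have "x m \<le> weight_sum n x"
    unfolding weight_sum_def using m(1) by (intro member_le_sum) auto
  ultimately have "weight_sum n (adjust_last q n s x) = (weight_sum n x - x m) + v"
    using adj by simp
  then have "weight_sum n (adjust_last q n s x) mod (q - 1) = s"
    using mod_add_residue_complement[OF s] by (simp add: v_def)
  moreover have "adjust_last q n s x \<in> words q n"
    using PiE_fun_upd[of v "\<lambda>_. {0..<q}" m x "{0..<n}"] x m(1) v(2)
    by (simp add: adj Hcw_def words_def insert_absorb)
  ultimately show "adjust_last q n s x \<in> residue_class q n w s"
    using x supp by (simp add: residue_class_def Hcw_def hweight_eq_card_supp)
qed

lemma hdist_le_1_if_adjust_last_eq:
  assumes "x \<in> Hcw q n w" "y \<in> Hcw q n w" "s < q - 1"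
    and eq: "adjust_last q n s x = adjust_last q n s y"
  shows "hdist n x y \<le> 1"
proof (rule hdist_le_1_if_agree_off)
  fix i assume "i \<noteq> Max (supp n x)"
  moreover have "Max (supp n x) = Max (supp n y)"
    using supp_adjust_last[OF assms(1,3)] supp_adjust_last[OF assms(2,3)] eq by simp
  ultimately show "x i = y i"
    using adjust_last_eq_off_Max[OF assms(1,3)] adjust_last_eq_off_Max[OF assms(2,3)] eq by metis
qed

lemma residue_class_nonempty:
  assumes "w \<le> n" "s < q - 1"
  shows "residue_class q n w s \<noteq> {}"
proof -
  define x0 :: "nat \<Rightarrow> nat" where "x0 = (\<lambda>i. if i < n then (if i < w then 1 else 0) else undefined)"
  have "supp n x0 = {..<w}" using assms(1) by (auto simp: supp_def x0_def)
  then have "x0 \<in> Hcw q n w" using q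
    by (auto simp: Hcw_def hweight_eq_card_supp words_def x0_def PiE_def extensional_def)
  then show ?thesis using adjust_last_in_residue_class[OF _ assms(2)] by blast
qed

lemma residue_class_optimal:
  assumes "w \<le> n" "s < q - 1"
  shows "optimal_code q n 2 w (residue_class q n w s)"
proof (rule optimal_codeI)
  show "is_code q n 2 w (residue_class q n w s)"
    unfolding is_code_def
    using residue_class_nonempty[OF assms] residue_class_min_dist
    by (auto simp: residue_class_def)
  fix D assume "is_code q n 2 w D"
  then show "card D \<le> card (residue_class q n w s)"
  proof (rule card_code_le_if_collapsing)
    show "adjust_last q n s ` Hcw q n w \<subseteq> residue_class q n w s"
      using adjust_last_in_residue_class[OF _ assms(2)] by blast
    show "finite (residue_class q n w s)"
      using finite_Hcw by (simp add: residue_class_def)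
    show "hdist n x y < 2"
      if "x \<in> Hcw q n w" "y \<in> Hcw q n w" "adjust_last q n s x = adjust_last q n s y" for x y
      using hdist_le_1_if_adjust_last_eq[OF that(1,2) assms(2) that(3)] by simp
  qed
qed

end

theorem theorem3p6:
  fixes q n w :: nat
  assumes "q \<ge> 2" and "1 \<le> w" and "w \<le> n"
  shows "\<exists>P. is_TOC q n 2 w P"
proof -
  have "is_TOC q n 2 w ((\<lambda>s. {x \<in> Hcw q n w. weight_sum n x mod (q - 1) = s}) ` {..<q - 1})"
  proof (rule is_TOC_fibers)
    show "weight_sum n x mod (q - 1) \<in> {..<q - 1}" for x
      using assms(1) by simp
    show "optimal_code q n 2 w {x \<in> Hcw q n w. weight_sum n x mod (q - 1) = s}"
      if "s \<in> {..<q - 1}" for s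
      using residue_class_optimal[OF assms] that by (simp add: residue_class_def)
  qed
  then show ?thesis by blast
qed

end
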